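(* Let $(a_i)_{i\ge0}$ be positive integers with $a_{2k}=1$ for all $k\geq0$ (the $a_{2k+1}$ arbitrary positive integers). Let $\ell$ be the irrational number with simple continued fraction $[a_0;a_1,a_2,\dots]$ and set $\theta=e^{2/\ell}$. Then $\mathcal A_\theta=\emptyset$. In particular, for every positive integer $c$, if $\theta=e^{-c+\sqrt{c(c+4)}}$ then $\mathcal A_\theta=\emptyset$.
   Context: $\lfloor x\rfloor$ is the floor of $x$; $\log$ is the natural logarithm. For real $\theta>1$ and positive integer $n$, $M'_\theta(n)=\left\lfloor 1/(\theta^{1/n}-1)\right\rfloor$, and $\mathcal A_\theta=\{n\in\mathbb N: M'_\theta(n)\neq \lfloor n/\log\theta-1/2\rfloor\}$, where $\mathbb N$ is the set of positive integers. $[a_0;a_1,a_2,\dots]$ denotes an infinite simple continued fraction. *)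

theory Defs
  imports Complex_Main
begin

fun cf_fin :: "(nat \<Rightarrow> nat) \<Rightarrow> nat \<Rightarrow> real" where
  "cf_fin a 0 = real (a 0)"
| "cf_fin a (Suc n) = real (a 0) + 1 / cf_fin (\<lambda>i. a (Suc i)) n"

definition M' :: "real \<Rightarrow> nat \<Rightarrow> int" where
  "M' \<theta> n = \<lfloor>1 / (\<theta> powr (1 / real n) - 1)\<rfloor>"

definition A_set :: "real \<Rightarrow> nat set" where
  "A_set \<theta> = {n. n \<ge> 1 \<and> M' \<theta> n \<noteq> \<lfloor>real n / ln \<theta> - 1/2\<rfloor>}"

end

theory Submission
  imports Defs
begin

(* Put y = n l / 2, so that M'(n) = floor (1/(e^(1/y) - 1)) and the comparison value
   is floor (y - 1/2).  From the Pade-type bounds  1/t - 1/2 < 1/(e^t - 1) < 1/t - 1/2 + t/12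
   the two floors can only differ if some integer m lies in (y - 1/2, y - 1/2 + 1/(12 y)), i.e.
   if an integer q = 2m + 1 satisfies 0 < n (q - n l) < 1/3.  So A_theta is empty as soon as l is
   badly approximable from above with constant 1/3.
   For l = [1; a1, 1, a3, 1, ...] the odd complete quotients satisfy T j = [a (2j+1); 1, T (j+1)]
   and l = [1; T 0]; a strong induction on the denominator, stepping from T j to T (j+1),
   shows n (r T j - n) > T j / 3 for all integers 1 <= n < r T j, which gives the required
   approximation property.  The second claim is the periodic case a (2j+1) = c. *)

lemma pos_of_pos_deriv:
  fixes g g' :: "real \<Rightarrow> real" and t :: real
  assumes der: "\<And>x. (g has_real_derivative g' x) (at x)"
    and pos: "\<And>x. 0 < x \<Longrightarrow> 0 < g' x"
    and g0: "g 0 = 0" and t: "0 < t"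
  shows "0 < g t"
proof -
  have "g 0 < g t"
  proof (rule DERIV_pos_imp_increasing_open[OF t])
    show "\<And>x. 0 < x \<Longrightarrow> x < t \<Longrightarrow> \<exists>y. (g has_real_derivative y) (at x) \<and> 0 < y"
      using der pos by blast
    show "continuous_on {0..t} g"
      using der by (intro continuous_at_imp_continuous_on ballI DERIV_isCont) blast
  qed
  with g0 show ?thesis by simp
qed

lemma exp_pade_11:
  fixes t :: real assumes t: "0 < t"
  shows "(2 - t) * exp t < 2 + t"
proof -
  have slope: "0 < 1 - (1 - x) * exp x" if "0 < x" for x :: real
    by (rule pos_of_pos_deriv[where g' = "\<lambda>x. x * exp x", OF _ _ _ that])
       (auto intro!: derivative_eq_intros simp: algebra_simps)
  have "0 < (2 + t) - (2 - t) * exp t"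
    by (rule pos_of_pos_deriv[where g' = "\<lambda>x. 1 - (1 - x) * exp x", OF _ slope _ t])
       (auto intro!: derivative_eq_intros simp: algebra_simps)
  then show ?thesis by simp
qed

lemma exp_pade_22:
  fixes t :: real assumes t: "0 < t"
  shows "t^2 + 6*t + 12 < (t^2 - 6*t + 12) * exp t"
proof -
  have d2: "0 < (x^2 - 2*x + 2) * exp x - 2" if "0 < x" for x :: real
    by (rule pos_of_pos_deriv[where g' = "\<lambda>x. x^2 * exp x", OF _ _ _ that])
       (auto intro!: derivative_eq_intros simp: algebra_simps power2_eq_square)
  have d1: "0 < (x^2 - 4*x + 6) * exp x - 2*x - 6" if "0 < x" for x :: real
    by (rule pos_of_pos_deriv[where g' = "\<lambda>x. (x^2 - 2*x + 2) * exp x - 2", OF _ d2 _ that])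
       (auto intro!: derivative_eq_intros simp: algebra_simps power2_eq_square)
  have "0 < (t^2 - 6*t + 12) * exp t - (t^2 + 6*t + 12)"
    by (rule pos_of_pos_deriv[where g' = "\<lambda>x. (x^2 - 4*x + 6) * exp x - 2*x - 6", OF _ d1 _ t])
       (auto intro!: derivative_eq_intros simp: algebra_simps power2_eq_square)
  then show ?thesis by simp
qed

text \<open>Lower bound of the Laurent expansion 1/(e^t-1) = 1/t - 1/2 + t/12 - ...\<close>

lemma inv_exp_minus_one_lower:
  fixes t :: real assumes t: "0 < t"
  shows "1/t - 1/2 < 1 / (exp t - 1)"
proof (cases "t < 2")
  case True
  have "(2 - t) * (exp t - 1) < 2 * t" using exp_pade_11[OF t] by (simp add: algebra_simps)
  then have "(2 - t) / (2*t) < 1 / (exp t - 1)" using t by (simp add: divide_simps)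
  then show ?thesis using t by (simp add: field_simps)
next
  case False
  then have "1/t - 1/2 \<le> 0" by (simp add: divide_simps)
  moreover have "0 < 1 / (exp t - 1)" using t by simp
  ultimately show ?thesis by linarith
qed

lemma inv_exp_minus_one_upper:
  fixes t :: real assumes t: "0 < t"
  shows "1 / (exp t - 1) < 1/t - 1/2 + t/12"
proof -
  have "12 * t < (t^2 - 6*t + 12) * (exp t - 1)" using exp_pade_22[OF t] by (simp add: algebra_simps)
  moreover have "0 < exp t - 1" using t by simp
  ultimately have "1 / (exp t - 1) < (t^2 - 6*t + 12) / (12 * t)" using t by (simp add: divide_simps)
  also have "\<dots> = 1/t - 1/2 + t/12" using t by (simp add: field_simps power2_eq_square)
  finally show ?thesis .
qed

text \<open>Diophantine estimate for y = [a; 1, w], direct case: a numerator n not exceeding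
  r a lies well inside the gap below r y.\<close>

lemma gap_small_numerator:
  fixes a w r n :: real
  defines "y \<equiv> a + w / (w + 1)"
  assumes a: "1 \<le> a" and w: "1 < w" and r: "1 \<le> r"
    and n: "1 \<le> n" "n \<le> r * a" "n < r * y"
  shows "y / 3 < n * (r * y - n)"
proof -
  have frac: "1/2 < w / (w + 1)" using w by (simp add: field_simps)
  have y: "3/2 < y" using frac a unfolding y_def by linarith
  show ?thesis
  proof (cases "n \<le> r * y - 1")
    case True
    have "n * (r * y - n) - (r * y - 1) = (n - 1) * (r * y - 1 - n)" by (simp add: algebra_simps)
    also have "\<dots> \<ge> 0" using True n(1) by simp
    finally have "r * y - 1 \<le> n * (r * y - n)" by simp
    moreover have "y \<le> r * y" using mult_right_mono[OF r, of y] y by simp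
    ultimately show ?thesis using y by linarith
  next
    case False
    have "n * (r * y - n) - (r * a) * (r * y - r * a) = (r * a - n) * (r * a + n - r * y)"
      by (simp add: algebra_simps)
    also have "\<dots> \<ge> 0" using False n by simp
    finally have "(r * a) * (r * y - r * a) \<le> n * (r * y - n)" by simp
    moreover have "r * a * (r * y - r * a) = (r * r) * (a * (w / (w + 1)))"
      unfolding y_def by (simp add: algebra_simps)
    moreover have "a * (w / (w + 1)) \<le> (r * r) * (a * (w / (w + 1)))"
    proof -
      have "1 \<le> r * r" using r by (metis mult_mono' mult_1 zero_le_one)
      moreover have "0 \<le> a * (w / (w + 1))" using a frac by (intro mult_nonneg_nonneg) linarith+
      ultimately show ?thesis using mult_right_mono[of 1 "r * r"] by fastforce
    qed
    moreover have "y / 3 < a * (w / (w + 1))"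
    proof -
      have "0 < a * (w - 1) + w * (a - 1)" using a w by (simp add: add_pos_nonneg)
      then have "a * (w + 1) + w < 3 * (a * w)" by (simp add: algebra_simps)
      moreover have "y * (w + 1) = a * (w + 1) + w" unfolding y_def using w by (simp add: field_simps)
      ultimately show ?thesis using w by (simp add: field_simps)
    qed
    ultimately show ?thesis by linarith
  qed
qed

text \<open>Diophantine estimate for y = [a; 1, w], reduction step: writing n = s + r a and r = m + s,
  the gap for (n, r) at y follows from the gap for (s, m) at the tail w.\<close>

lemma gap_reduction:
  fixes a w m s :: real
  defines "y \<equiv> a + w / (w + 1)"
  assumes a: "1 \<le> a" and w: "1 < w" and s: "1 \<le> s" and ms: "s < m * w"
    and IH: "w / 3 < s * (m * w - s)"
  shows "y / 3 < (s + (m + s) * a) * ((m + s) * y - (s + (m + s) * a))"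
proof -
  define E where "E = m * w - s"
  have yw: "y * (w + 1) = a * (w + 1) + w" unfolding y_def using w by (simp add: field_simps)
  have shift: "((m + s) * y - (s + (m + s) * a)) * (w + 1) = E"
    unfolding E_def using yw by (simp add: algebra_simps)
  have "s * ((w + 1) / 3) \<le> (m + s) * (w / 3)" using ms by (simp add: algebra_simps)
  also have "\<dots> < (m + s) * (s * E)"
  proof (rule mult_strict_left_mono)
    show "w / 3 < s * E" using IH unfolding E_def .
    have "0 < m * w" using s ms by linarith
    then have "0 < m" using w by (simp add: zero_less_mult_iff)
    then show "0 < m + s" using s by linarith
  qed
  also have "\<dots> = s * ((m + s) * E)" by (simp add: algebra_simps)
  finally have "(w + 1) / 3 < (m + s) * E" using s by (simp add: mult_less_cancel_left_pos)
  then have "a * ((w + 1) / 3) \<le> a * ((m + s) * E)" using a by (intro mult_left_mono) auto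
  moreover have "w / 3 < s * E" using IH unfolding E_def .
  moreover have "(s + (m + s) * a) * E = s * E + a * ((m + s) * E)" by (simp add: algebra_simps)
  moreover have "y * (w + 1) / 3 = w / 3 + a * ((w + 1) / 3)" using yw by (simp add: algebra_simps)
  ultimately have "y * (w + 1) / 3 < (s + (m + s) * a) * E" by linarith
  then have "y / 3 * (w + 1) < (s + (m + s) * a) * ((m + s) * y - (s + (m + s) * a)) * (w + 1)"
    using shift by (simp add: mult.assoc)
  from mult_right_less_imp_less[OF this] w show ?thesis by simp
qed

lemma quotient_gap:
  fixes T :: "nat \<Rightarrow> real" and A :: "nat \<Rightarrow> nat" and n :: int
  assumes pos: "\<And>j. 0 < T j" and A1: "\<And>j. 1 \<le> A j"
    and rec: "\<And>j. T j = A j + 1 / (1 + 1 / T (Suc j))"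
    and n: "1 \<le> n" "real_of_int n < real r * T j"
  shows "T j / 3 < n * (real r * T j - n)"
  using n
proof (induction r arbitrary: j n rule: less_induct)
  case (less r)
  define a where "a = real (A j)"
  define w where "w = T (Suc j)"
  have a: "1 \<le> a" unfolding a_def using A1 by simp
  have w: "1 < w"
  proof -
    have "0 < 1 / (1 + 1 / T (Suc (Suc j)))" using pos[of "Suc (Suc j)"] by (simp add: add_pos_pos)
    then show ?thesis unfolding w_def using rec[of "Suc j"] A1[of "Suc j"] by linarith
  qed
  have Tj: "T j = a + w / (w + 1)"
    using rec[of j] w unfolding a_def w_def by (simp add: field_simps)
  have r: "1 \<le> real r"
  proof -
    have "0 < real r * T j" using less.prems by linarith
    then show ?thesis using pos[of j] by (simp add: zero_less_mult_iff)
  qed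
  define s where "s = n - int r * int (A j)"
  have n_eq: "real_of_int n = real_of_int s + real r * a" unfolding s_def a_def by simp
  show ?case
  proof (cases "1 \<le> s")
    case True
    define m where "m = int r - s"
    have "(real r * T j - n) * (w + 1) = m * w - s"
      unfolding Tj m_def n_eq using w by (simp add: field_simps)
    moreover have "0 < (real r * T j - n) * (w + 1)" using less.prems w by simp
    ultimately have ms: "real_of_int s < m * w" by simp
    have m: "1 \<le> m"
    proof -
      have "0 < m * w" using ms True by linarith
      then have "0 < real_of_int m" using w by (simp add: zero_less_mult_iff)
      then show ?thesis by simp
    qed
    have m_nat: "real (nat m) = real_of_int m" using m by simp
    have "nat m < r" using True m unfolding m_def by linarith
    then have IH: "w / 3 < s * (m * w - s)"
      using less.IH[of "nat m" s "Suc j"] True ms m_nat unfolding w_def by simp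
    have "T j / 3 < (s + (real_of_int m + s) * a)
                    * ((real_of_int m + s) * T j - (s + (real_of_int m + s) * a))"
      unfolding Tj by (rule gap_reduction[OF a w _ ms IH]) (use True in simp)
    then show ?thesis unfolding n_eq m_def by simp
  next
    case False
    have "real_of_int n \<le> real r * a" using False n_eq by simp
    then show ?thesis using gap_small_numerator[OF a w r] less.prems unfolding Tj by simp
  qed
qed

lemma approximation_from_above:
  fixes T :: "nat \<Rightarrow> real" and A :: "nat \<Rightarrow> nat" and n :: nat and q :: int
  assumes pos: "\<And>j. 0 < T j" and A1: "\<And>j. 1 \<le> A j"
    and rec: "\<And>j. T j = A j + 1 / (1 + 1 / T (Suc j))"
    and n: "1 \<le> n" and q: "real n * (1 + 1 / T 0) < q"
  shows "1/3 < real n * (q - real n * (1 + 1 / T 0))"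
proof -
  define r where "r = q - int n"
  have T0: "0 < T 0" by (rule pos)
  have scaled: "T 0 * (q - real n * (1 + 1 / T 0)) = r * T 0 - n"
    unfolding r_def using T0 by (simp add: field_simps)
  have "0 < T 0 * (q - real n * (1 + 1 / T 0))" using q T0 by simp
  then have above: "real n < r * T 0" unfolding scaled by simp
  then have "0 < r * T 0" using of_nat_0_le_iff[of n] by linarith
  then have r_pos: "0 < r" using T0 by (simp add: zero_less_mult_iff)
  then have "real_of_int (int n) < real (nat r) * T 0" using above by simp
  then have "T 0 / 3 < real n * (real (nat r) * T 0 - real n)"
    using quotient_gap[where T = T and A = A and n = "int n" and r = "nat r" and j = 0, OF pos A1 rec]
      n r_pos by simp
  also have "\<dots> = real n * (T 0 * (q - real n * (1 + 1 / T 0)))"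
    using r_pos by (simp add: scaled)
  also have "\<dots> = T 0 * (real n * (q - real n * (1 + 1 / T 0)))" by (simp add: algebra_simps)
  finally have "T 0 * (1/3) < T 0 * (real n * (q - real n * (1 + 1 / T 0)))" by simp
  then show ?thesis using T0 by (simp only: mult_less_cancel_left_pos)
qed

lemma floor_eq_without_integer_gap:
  fixes x F e :: real
  assumes lo: "x < F" and hi: "F < x + e"
    and gap: "\<And>m::int. x < m \<Longrightarrow> x + e \<le> m"
  shows "\<lfloor>F\<rfloor> = \<lfloor>x\<rfloor>"
proof -
  have "\<not> x < real_of_int \<lfloor>F\<rfloor>" using gap[of "\<lfloor>F\<rfloor>"] hi of_int_floor_le[of F] by linarith
  then have "\<lfloor>F\<rfloor> \<le> \<lfloor>x\<rfloor>" by (simp add: le_floor_iff)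
  moreover have "\<lfloor>x\<rfloor> \<le> \<lfloor>F\<rfloor>" using lo by (intro floor_mono) simp
  ultimately show ?thesis by simp
qed

lemma A_set_empty_if_gap_above:
  fixes l :: real
  assumes l: "1 \<le> l"
    and gap: "\<And>(n::nat) (q::int). 1 \<le> n \<Longrightarrow> real n * l < q \<Longrightarrow> 1/3 < real n * (q - real n * l)"
  shows "A_set (exp (2 / l)) = {}"
proof -
  have "M' (exp (2 / l)) n = \<lfloor>real n / ln (exp (2 / l)) - 1/2\<rfloor>" if n: "1 \<le> n" for n
  proof -
    define y where "y = real n * l / 2"
    have y: "0 < y" unfolding y_def using n l by simp
    have root: "exp (2 / l) powr (1 / real n) = exp (1 / y)"
      unfolding y_def powr_def using n l by (simp add: field_simps)
    have lnq: "real n / ln (exp (2 / l)) = y" unfolding y_def by simp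
    have "\<lfloor>1 / (exp (1 / y) - 1)\<rfloor> = \<lfloor>y - 1/2\<rfloor>"
    proof (rule floor_eq_without_integer_gap)
      show "y - 1/2 < 1 / (exp (1 / y) - 1)"
        using inv_exp_minus_one_lower[of "1 / y"] y by simp
      show "1 / (exp (1 / y) - 1) < y - 1/2 + 1 / (12 * y)"
        using inv_exp_minus_one_upper[of "1 / y"] y by simp
      fix m :: int assume m: "y - 1/2 < m"
      define d where "d = 2 * m + 1 - real n * l"
      have d: "0 < d" using m unfolding d_def y_def by simp
      have "1/3 < real n * d" using gap[OF n, of "2 * m + 1"] d unfolding d_def by simp
      also have "\<dots> \<le> (real n * l) * d"
        using mult_left_mono[OF l, of "real n"] d by (simp add: mult_right_mono)
      also have "\<dots> = (2 * y) * d" unfolding y_def by simp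
      finally have "1 / (6 * y) < d" using y by (simp add: field_simps)
      moreover have "m = y - 1/2 + d / 2" unfolding d_def y_def by (simp add: field_simps)
      ultimately show "y - 1/2 + 1 / (12 * y) \<le> m" by simp
    qed
    then show ?thesis unfolding M'_def root lnq .
  qed
  then show ?thesis unfolding A_set_def by auto
qed

lemma cf_fin_bounds:
  assumes pos: "\<forall>i. 0 < a i"
  shows "real (a 0) \<le> cf_fin a n \<and> cf_fin a n \<le> real (a 0) + 1"
  using pos
proof (induction n arbitrary: a)
  case 0
  then show ?case by simp
next
  case (Suc n)
  have "real (a 1) \<le> cf_fin (\<lambda>i. a (Suc i)) n" using Suc.IH[of "\<lambda>i. a (Suc i)"] Suc.prems by simp
  moreover have "1 \<le> real (a 1)" using Suc.prems by (simp add: Suc_le_eq)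
  ultimately have "1 \<le> cf_fin (\<lambda>i. a (Suc i)) n" by linarith
  then show ?case by simp
qed

lemma cf_fin_limit_shift:
  assumes pos: "\<forall>i. 0 < a i" and lim: "(\<lambda>n. cf_fin a n) \<longlonglongrightarrow> L"
  shows "\<exists>L'. (\<lambda>n. cf_fin (\<lambda>i. a (Suc i)) n) \<longlonglongrightarrow> L' \<and> L = real (a 0) + 1 / L' \<and> 1 \<le> L'"
proof -
  define u where "u n = cf_fin (\<lambda>i. a (Suc i)) n" for n
  have u_bounds: "1 \<le> u n \<and> u n \<le> real (a 1) + 1" for n
  proof -
    have "1 \<le> real (a 1)" using pos by (simp add: Suc_le_eq)
    then show ?thesis using cf_fin_bounds[of "\<lambda>i. a (Suc i)" n] pos unfolding u_def by auto
  qed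
  have "(\<lambda>n. cf_fin a (Suc n)) \<longlonglongrightarrow> L" using lim by (rule LIMSEQ_Suc)
  then have "(\<lambda>n. (real (a 0) + 1 / u n) - real (a 0)) \<longlonglongrightarrow> L - real (a 0)"
    unfolding u_def by (intro tendsto_intros) simp
  then have inv: "(\<lambda>n. 1 / u n) \<longlonglongrightarrow> L - real (a 0)" by simp
  have "1 / (real (a 1) + 1) \<le> L - real (a 0)"
  proof (rule LIMSEQ_le_const[OF inv], intro exI allI impI)
    fix n
    show "1 / (real (a 1) + 1) \<le> 1 / u n"
      using u_bounds[of n] by (intro divide_left_mono) auto
  qed
  moreover have "0 < 1 / (real (a 1) + 1)" by simp
  ultimately have L_pos: "0 < L - real (a 0)" by linarith
  have "(\<lambda>n. inverse (1 / u n)) \<longlonglongrightarrow> inverse (L - real (a 0))"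
    using inv L_pos by (intro tendsto_inverse) auto
  then have conv: "u \<longlonglongrightarrow> 1 / (L - real (a 0))" by (simp add: inverse_eq_divide)
  moreover have "1 \<le> 1 / (L - real (a 0))"
    by (rule LIMSEQ_le_const[OF conv]) (use u_bounds in auto)
  ultimately show ?thesis using L_pos unfolding u_def by (intro exI[of _ "1 / (L - real (a 0))"]) auto
qed

lemma complete_quotients:
  assumes pos: "\<forall>i. 0 < a i" and lim: "(\<lambda>n. cf_fin a n) \<longlonglongrightarrow> l"
  shows "\<exists>t. t 0 = l \<and> (\<forall>k. t k = real (a k) + 1 / t (Suc k) \<and> 1 \<le> t (Suc k))"
proof -
  have conv: "convergent (\<lambda>n. cf_fin (\<lambda>i. a (i + k)) n)" for k
  proof (induction k)
    case 0
    then show ?case using lim by (auto intro: convergentI)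
  next
    case (Suc k)
    then obtain L where "(\<lambda>n. cf_fin (\<lambda>i. a (i + k)) n) \<longlonglongrightarrow> L" by (auto simp: convergent_def)
    from cf_fin_limit_shift[OF _ this] pos show ?case by (auto intro: convergentI)
  qed
  define t where "t k = lim (\<lambda>n. cf_fin (\<lambda>i. a (i + k)) n)" for k
  have t_lim: "(\<lambda>n. cf_fin (\<lambda>i. a (i + k)) n) \<longlonglongrightarrow> t k" for k
    using conv[of k] unfolding t_def by (simp add: convergent_LIMSEQ_iff)
  have "t 0 = l" using t_lim[of 0] lim LIMSEQ_unique by auto
  moreover have "t k = real (a k) + 1 / t (Suc k) \<and> 1 \<le> t (Suc k)" for k
  proof -
    obtain L' where L': "(\<lambda>n. cf_fin (\<lambda>i. a (Suc i + k)) n) \<longlonglongrightarrow> L'"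
      "t k = real (a k) + 1 / L'" "1 \<le> L'"
      using cf_fin_limit_shift[OF _ t_lim[of k]] pos by auto
    have "L' = t (Suc k)" using L'(1) t_lim[of "Suc k"] LIMSEQ_unique by auto
    then show ?thesis using L' by auto
  qed
  ultimately show ?thesis by blast
qed

lemma A_set_empty_even_ones:
  fixes a :: "nat \<Rightarrow> nat" and l :: real
  assumes pos: "\<forall>i. 0 < a i" and ones: "\<forall>k. a (2 * k) = 1"
    and lim: "(\<lambda>n. cf_fin a n) \<longlonglongrightarrow> l"
  shows "A_set (exp (2 / l)) = {}"
proof -
  obtain t where t0: "t 0 = l" and t_rec: "\<And>k. t k = real (a k) + 1 / t (Suc k)"
    and t_ge: "\<And>k. 1 \<le> t (Suc k)"
    using complete_quotients[OF pos lim] by blast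
  define T where "T j = t (2 * j + 1)" for j
  define A where "A j = a (2 * j + 1)" for j
  have T_pos: "0 < T j" for j using t_ge[of "2 * j"] unfolding T_def by simp
  have A1: "1 \<le> A j" for j using pos unfolding A_def by (simp add: Suc_le_eq)
  have even_step: "t (2 * k) = 1 + 1 / t (2 * k + 1)" for k
    using t_rec[of "2 * k"] ones by simp
  have rec: "T j = A j + 1 / (1 + 1 / T (Suc j))" for j
    using t_rec[of "2 * j + 1"] even_step[of "Suc j"] unfolding T_def A_def by simp
  have l_eq: "l = 1 + 1 / T 0" using even_step[of 0] t0 unfolding T_def by simp
  show ?thesis
  proof (rule A_set_empty_if_gap_above)
    show "1 \<le> l" using l_eq T_pos[of 0] by simp
    show "\<And>(n::nat) (q::int). 1 \<le> n \<Longrightarrow> real n * l < q \<Longrightarrow> 1/3 < real n * (q - real n * l)"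
      unfolding l_eq by (rule approximation_from_above[where T = T and A = A, OF T_pos A1 rec])
  qed
qed

text \<open>Second claim: the constant sequence \<beta> = (c + sqrt (c (c + 4)))/2 satisfies
  \<beta> = [c; 1, \<beta>], and 2 / [1; \<beta>] = -c + sqrt (c (c + 4)).\<close>

lemma A_set_empty_quadratic:
  fixes c :: nat
  assumes c: "0 < c"
  shows "A_set (exp (- real c + sqrt (real c * (real c + 4)))) = {}"
proof -
  define S where "S = sqrt (real c * (real c + 4))"
  have S2: "S^2 = real c * (real c + 4)" unfolding S_def by simp
  define \<beta> where "\<beta> = (real c + S) / 2"
  have \<beta>: "0 < \<beta>" unfolding \<beta>_def S_def using c by (simp add: add_pos_nonneg)
  have \<beta>_fix: "\<beta> = real c + 1 / (1 + 1 / \<beta>)"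
  proof -
    have "\<beta> * (\<beta> + 1) = real c * (\<beta> + 1) + \<beta>"
      unfolding \<beta>_def using S2 by (simp add: algebra_simps power2_eq_square)
    then show ?thesis using \<beta> by (simp add: field_simps)
  qed
  have l_eq: "2 / (1 + 1 / \<beta>) = - real c + S"
  proof -
    have "(S - real c) * (\<beta> + 1) = 2 * \<beta>"
      unfolding \<beta>_def using S2 by (simp add: algebra_simps power2_eq_square)
    then show ?thesis using \<beta> by (simp add: field_simps)
  qed
  have "A_set (exp (2 / (1 + 1 / \<beta>))) = {}"
  proof (rule A_set_empty_if_gap_above)
    show "1 \<le> 1 + 1 / \<beta>" using \<beta> by simp
    show "\<And>(n::nat) (q::int). 1 \<le> n \<Longrightarrow> real n * (1 + 1 / \<beta>) < q
            \<Longrightarrow> 1/3 < real n * (q - real n * (1 + 1 / \<beta>))"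
      by (rule approximation_from_above[where T = "\<lambda>_. \<beta>" and A = "\<lambda>_. c"])
         (use \<beta> c \<beta>_fix in auto)
  qed
  then show ?thesis unfolding l_eq S_def .
qed

theorem theorem5:
  shows "(\<forall>(a :: nat \<Rightarrow> nat) (l :: real).
            (\<forall>i. a i > 0) \<longrightarrow> (\<forall>k. a (2 * k) = 1) \<longrightarrow>
            (\<lambda>n. cf_fin a n) \<longlonglongrightarrow> l \<longrightarrow>
            A_set (exp (2 / l)) = {})
       \<and> (\<forall>(c :: nat) (\<theta> :: real). c > 0 \<longrightarrow>
            \<theta> = exp (- real c + sqrt (real c * (real c + 4))) \<longrightarrow> A_set \<theta> = {})"
  using A_set_empty_even_ones A_set_empty_quadratic by blast

end
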